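(* The influence (objective) function of the DIME problem is not adaptive submodular: there exist a DIME instance (an uncertain network with existence probabilities $u$, propagation probabilities $p$, and horizon $L$), partial realizations $\psi\subseteq\psi'$, and a node $v$ such that $\Delta(v\mid\psi)<\Delta(v\mid\psi')$.
   Context: An uncertain network is a directed graph $G=(V,E)$ whose edge set is the disjoint union of certain edges $E_c$ and uncertain edges $E_u$; each $e\in E_u$ exists independently with probability $u(e)$, and each $e\in E$ has a propagation probability $p(e)$. Influence model: influenced nodes stay influenced forever; at each time step, every influenced node $x$ independently tries to influence each not-yet-influenced out-neighbour $y$ along an existing edge $(x,y)$, succeeding with probability $p(x,y)$; failed attempts are repeated in every subsequent time step. A realization $\Phi$ specifies, for every uncertain edge, whether it exists. For a set $S\subseteq V$ of selected nodes, $f(S,\Phi)$ denotes the expected number of nodes influenced after $L$ time steps of spread starting from $S$ (all of $S$ influenced initially) in the network given by $\Phi$, with expectation over the propagation randomness. Selecting a node reveals (observes) the existence states of all uncertain edges leaving that node. A partial realization $\psi$ consists of a set $\mathrm{dom}(\psi)$ of selected nodes together with the observed states of the uncertain edges leaving them; $\Phi\sim\psi$ means $\Phi$ is consistent with these observations; $\psi\subseteq\psi'$ means $\mathrm{dom}(\psi)\subseteq\mathrm{dom}(\psi')$ and the observations agree. The conditional expected marginal benefit is $\Delta(v\mid\psi)=\mathbb{E}_{\Phi}[f(\mathrm{dom}(\psi)\cup\{v\},\Phi)-f(\mathrm{dom}(\psi),\Phi)\mid \Phi\sim\psi]$, with $\Phi$ drawn from the edge-existence distribution. The function is adaptive submodular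 (Golovin–Krause) if $\Delta(v\mid\psi)\ge\Delta(v\mid\psi')$ for all $\psi\subseteq\psi'$ and all $v$. *)

theory Defs
  imports Main Complex_Main
begin

definition step_prob :: "('a \<times> 'a) set \<Rightarrow> ('a \<times> 'a \<Rightarrow> real) \<Rightarrow> 'a set \<Rightarrow> 'a \<Rightarrow> real" where
  "step_prob E p A y = 1 - (\<Prod>x\<in>{x\<in>A. (x, y) \<in> E}. 1 - p (x, y))"

definition trans_prob :: "'a set \<Rightarrow> ('a \<times> 'a) set \<Rightarrow> ('a \<times> 'a \<Rightarrow> real) \<Rightarrow> 'a set \<Rightarrow> 'a set \<Rightarrow> real" where
  "trans_prob V E p A B =
     (if A \<subseteq> B \<and> B \<subseteq> V
      then (\<Prod>y\<in>B - A. step_prob E p A y) * (\<Prod>y\<in>V - B. 1 - step_prob E p A y)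
      else 0)"

fun spread_dist :: "'a set \<Rightarrow> ('a \<times> 'a) set \<Rightarrow> ('a \<times> 'a \<Rightarrow> real) \<Rightarrow> nat \<Rightarrow> 'a set \<Rightarrow> 'a set \<Rightarrow> real" where
  "spread_dist V E p 0 S B = (if B = S then 1 else 0)"
| "spread_dist V E p (Suc t) S B = (\<Sum>A\<in>Pow V. spread_dist V E p t S A * trans_prob V E p A B)"

(* f(S, Phi): expected number of influenced nodes after L steps in the network
   whose existing edges are Ec \<union> Phi (Phi = set of existing uncertain edges). *)
definition influence :: "'a set \<Rightarrow> ('a \<times> 'a) set \<Rightarrow> ('a \<times> 'a \<Rightarrow> real) \<Rightarrow> nat \<Rightarrow> ('a \<times> 'a) set \<Rightarrow> 'a set \<Rightarrow> real" where
  "influence V Ec p L Phi S = (\<Sum>B\<in>Pow V. spread_dist V (Ec \<union> Phi) p L S B * real (card B))"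

definition real_prob :: "('a \<times> 'a) set \<Rightarrow> ('a \<times> 'a \<Rightarrow> real) \<Rightarrow> ('a \<times> 'a) set \<Rightarrow> real" where
  "real_prob Eu u Phi = (\<Prod>e\<in>Phi. u e) * (\<Prod>e\<in>Eu - Phi. 1 - u e)"

(* A partial realization is a pair (D, O): D = dom(psi) the selected nodes,
   O = the observed-existing uncertain edges leaving D (the other uncertain edges
   leaving D are observed absent). *)
definition consistent :: "('a \<times> 'a) set \<Rightarrow> 'a set \<times> ('a \<times> 'a) set \<Rightarrow> ('a \<times> 'a) set \<Rightarrow> bool" where
  "consistent Eu psi Phi \<longleftrightarrow> Phi \<subseteq> Eu \<and>
     (\<forall>e\<in>Eu. fst e \<in> fst psi \<longrightarrow> (e \<in> Phi \<longleftrightarrow> e \<in> snd psi))"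

definition partial_realization :: "'a set \<Rightarrow> ('a \<times> 'a) set \<Rightarrow> 'a set \<times> ('a \<times> 'a) set \<Rightarrow> bool" where
  "partial_realization V Eu psi \<longleftrightarrow> fst psi \<subseteq> V \<and> snd psi \<subseteq> {e\<in>Eu. fst e \<in> fst psi}"

definition subrealization :: "'a set \<times> ('a \<times> 'a) set \<Rightarrow> 'a set \<times> ('a \<times> 'a) set \<Rightarrow> bool" where
  "subrealization psi psi' \<longleftrightarrow> fst psi \<subseteq> fst psi' \<and> snd psi = {e\<in>snd psi'. fst e \<in> fst psi}"

definition psi_prob :: "('a \<times> 'a) set \<Rightarrow> ('a \<times> 'a \<Rightarrow> real) \<Rightarrow> 'a set \<times> ('a \<times> 'a) set \<Rightarrow> real" where
  "psi_prob Eu u psi = (\<Sum>Phi\<in>{Phi\<in>Pow Eu. consistent Eu psi Phi}. real_prob Eu u Phi)"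

definition cond_marginal ::
  "'a set \<Rightarrow> ('a \<times> 'a) set \<Rightarrow> ('a \<times> 'a) set \<Rightarrow> ('a \<times> 'a \<Rightarrow> real) \<Rightarrow> ('a \<times> 'a \<Rightarrow> real) \<Rightarrow> nat
    \<Rightarrow> 'a \<Rightarrow> 'a set \<times> ('a \<times> 'a) set \<Rightarrow> real" where
  "cond_marginal V Ec Eu u p L v psi =
     (\<Sum>Phi\<in>{Phi\<in>Pow Eu. consistent Eu psi Phi}.
        real_prob Eu u Phi * (influence V Ec p L Phi (fst psi \<union> {v}) - influence V Ec p L Phi (fst psi)))
     / psi_prob Eu u psi"

definition uncertain_network ::
  "'a set \<Rightarrow> ('a \<times> 'a) set \<Rightarrow> ('a \<times> 'a) set \<Rightarrow> ('a \<times> 'a \<Rightarrow> real) \<Rightarrow> ('a \<times> 'a \<Rightarrow> real) \<Rightarrow> bool" where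
  "uncertain_network V Ec Eu u p \<longleftrightarrow>
     finite V \<and> Ec \<union> Eu \<subseteq> V \<times> V \<and> Ec \<inter> Eu = {} \<and>
     (\<forall>e\<in>Eu. 0 \<le> u e \<and> u e \<le> 1) \<and>
     (\<forall>e\<in>Ec \<union> Eu. 0 \<le> p e \<and> p e \<le> 1)"

end

theory Submission
  imports Defs
begin

text \<open>
  Take nodes 0, 1, 2, 3 with certain edges 0 \<rightarrow> 1 and 3 \<rightarrow> 2, one uncertain edge 1 \<rightarrow> 2
  existing with probability 1/2, all propagation probabilities 1 and horizon 2; then the
  spread is deterministic. From the seed 0, node 3 gains the nodes 3 and 2 when the uncertain
  edge is absent, but only node 3 when it is present (node 2 is then reached from 0 anyway),
  so its expected gain is 3/2. Selecting node 1 reveals that the edge is absent, which raises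
  the gain of node 3 to 2.
\<close>

definition spread_step :: "'a set \<Rightarrow> ('a \<times> 'a) set \<Rightarrow> 'a set \<Rightarrow> 'a set" where
  "spread_step V E A = A \<union> {y\<in>V. \<exists>x\<in>A. (x, y) \<in> E}"

lemma spread_step_subset: "A \<subseteq> V \<Longrightarrow> spread_step V E A \<subseteq> V"
  by (auto simp: spread_step_def)

lemma funpow_spread_step_subset: "S \<subseteq> V \<Longrightarrow> (spread_step V E ^^ t) S \<subseteq> V"
  by (induction t) (auto simp: spread_step_subset)

lemma step_prob_certain:
  assumes "finite A"
  shows "step_prob E (\<lambda>_. 1) A y = (if \<exists>x\<in>A. (x, y) \<in> E then 1 else 0)"
proof (cases "\<exists>x\<in>A. (x, y) \<in> E")
  case True
  then have "(\<Prod>x\<in>{x\<in>A. (x, y) \<in> E}. 1 - (1::real)) = 0"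
    using assms by (intro prod_zero) auto
  with True show ?thesis by (simp add: step_prob_def)
next
  case False
  then have no_edges: "{x\<in>A. (x, y) \<in> E} = {}" by auto
  with False show ?thesis unfolding step_prob_def no_edges by simp
qed

lemma trans_prob_certain:
  assumes "finite V" "A \<subseteq> V"
  shows "trans_prob V E (\<lambda>_. 1) A B = (if B = spread_step V E A then 1 else 0)"
proof -
  note step = step_prob_certain[OF finite_subset[OF assms(2,1)]]
  consider "B = spread_step V E A" | "B \<noteq> spread_step V E A" "A \<subseteq> B" "B \<subseteq> V"
    | "\<not> (A \<subseteq> B \<and> B \<subseteq> V)"
    by blast
  then show ?thesis
  proof cases
    case 1
    have "(\<Prod>y\<in>B - A. step_prob E (\<lambda>_. 1) A y) = 1" "(\<Prod>y\<in>V - B. 1 - step_prob E (\<lambda>_. 1) A y) = 1"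
      using 1 by (auto simp: step spread_step_def intro!: prod.neutral)
    with 1 assms(2) show ?thesis by (auto simp: trans_prob_def spread_step_def)
  next
    case 2
    then obtain y where
      "(y \<in> B - A \<and> \<not> (\<exists>x\<in>A. (x, y) \<in> E)) \<or> (y \<in> V - B \<and> (\<exists>x\<in>A. (x, y) \<in> E))"
      unfolding spread_step_def by blast
    moreover have "finite B" using 2 assms(1) finite_subset by blast
    ultimately have "(\<Prod>y\<in>B - A. step_prob E (\<lambda>_. 1) A y) = 0 \<or>
                     (\<Prod>y\<in>V - B. 1 - step_prob E (\<lambda>_. 1) A y) = 0"
      using assms(1) by (auto simp: step prod_zero_iff)
    with 2 show ?thesis by (auto simp: trans_prob_def)
  next
    case 3
    then show ?thesis using assms(2) spread_step_subset[of A V E]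
      by (auto simp: trans_prob_def spread_step_def)
  qed
qed

lemma spread_dist_certain:
  assumes "finite V" "S \<subseteq> V"
  shows "spread_dist V E (\<lambda>_. 1) t S B = (if B = (spread_step V E ^^ t) S then 1 else 0)"
proof (induction t arbitrary: B)
  case 0
  then show ?case by simp
next
  case (Suc t)
  let ?C = "(spread_step V E ^^ t) S"
  have "spread_dist V E (\<lambda>_. 1) (Suc t) S B =
        (\<Sum>A\<in>Pow V. if A = ?C then trans_prob V E (\<lambda>_. 1) A B else 0)"
    unfolding spread_dist.simps Suc.IH by (intro sum.cong) auto
  also have "\<dots> = trans_prob V E (\<lambda>_. 1) ?C B"
    using funpow_spread_step_subset[OF assms(2)] assms(1) by simp
  also have "\<dots> = (if B = (spread_step V E ^^ Suc t) S then 1 else 0)"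
    using trans_prob_certain[OF assms(1) funpow_spread_step_subset[OF assms(2)]] by simp
  finally show ?case .
qed

lemma influence_certain:
  assumes "finite V" "S \<subseteq> V"
  shows "influence V Ec (\<lambda>_. 1) L Phi S = card ((spread_step V (Ec \<union> Phi) ^^ L) S)"
proof -
  let ?C = "(spread_step V (Ec \<union> Phi) ^^ L) S"
  have "influence V Ec (\<lambda>_. 1) L Phi S = (\<Sum>B\<in>Pow V. if B = ?C then real (card B) else 0)"
    unfolding influence_def spread_dist_certain[OF assms] by (intro sum.cong) auto
  also have "\<dots> = card ?C"
    using funpow_spread_step_subset[OF assms(2)] assms(1) by simp
  finally show ?thesis .
qed

definition ex_nodes :: "nat set" where "ex_nodes = {0, 1, 2, 3}"
definition ex_certain_edges :: "(nat \<times> nat) set" where "ex_certain_edges = {(0, 1), (3, 2)}"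
definition ex_uncertain_edges :: "(nat \<times> nat) set" where "ex_uncertain_edges = {(1, 2)}"
definition ex_existence_prob :: "nat \<times> nat \<Rightarrow> real" where "ex_existence_prob = (\<lambda>_. 1/2)"

abbreviation "ex_marginal \<equiv>
  cond_marginal ex_nodes ex_certain_edges ex_uncertain_edges ex_existence_prob (\<lambda>_. 1) 2 3"

lemma uncertain_network_ex:
  "uncertain_network ex_nodes ex_certain_edges ex_uncertain_edges ex_existence_prob (\<lambda>_. 1)"
  by (simp add: uncertain_network_def ex_nodes_def ex_certain_edges_def ex_uncertain_edges_def
      ex_existence_prob_def)

lemma real_prob_ex:
  "real_prob ex_uncertain_edges ex_existence_prob {} = 1/2"
  "real_prob ex_uncertain_edges ex_existence_prob {(1, 2)} = 1/2"
  by (simp_all add: real_prob_def ex_uncertain_edges_def ex_existence_prob_def)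

lemma mem_ex_nodes: "x \<in> ex_nodes \<longleftrightarrow> x \<le> 3"
  by (auto simp: ex_nodes_def)

lemma spread_step_ex:
  "spread_step ex_nodes ex_certain_edges {0} = {0, 1}"
  "spread_step ex_nodes ex_certain_edges {0, 1} = {0, 1}"
  "spread_step ex_nodes ex_certain_edges {0, 3} = {0, 1, 2, 3}"
  "spread_step ex_nodes ex_certain_edges {0, 1, 3} = {0, 1, 2, 3}"
  "spread_step ex_nodes ex_certain_edges {0, 1, 2, 3} = {0, 1, 2, 3}"
  "spread_step ex_nodes (insert (1, 2) ex_certain_edges) {0} = {0, 1}"
  "spread_step ex_nodes (insert (1, 2) ex_certain_edges) {0, 1} = {0, 1, 2}"
  "spread_step ex_nodes (insert (1, 2) ex_certain_edges) {0, 3} = {0, 1, 2, 3}"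
  "spread_step ex_nodes (insert (1, 2) ex_certain_edges) {0, 1, 2, 3} = {0, 1, 2, 3}"
  by (auto simp: spread_step_def ex_nodes_def ex_certain_edges_def)

lemma influence_ex:
  assumes "S \<subseteq> ex_nodes"
  shows "influence ex_nodes ex_certain_edges (\<lambda>_. 1) 2 Phi S =
    card (spread_step ex_nodes (ex_certain_edges \<union> Phi) (spread_step ex_nodes (ex_certain_edges \<union> Phi) S))"
  using influence_certain[OF _ assms] by (simp add: ex_nodes_def numeral_2_eq_2)

lemma consistent_ex:
  "{Phi\<in>Pow ex_uncertain_edges. consistent ex_uncertain_edges ({0}, {}) Phi} = {{}, {(1, 2)}}"
  "{Phi\<in>Pow ex_uncertain_edges. consistent ex_uncertain_edges ({0, 1}, {}) Phi} = {{}}"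
  by (auto simp: consistent_def ex_uncertain_edges_def Pow_insert)

lemma ex_marginal_before: "ex_marginal ({0}, {}) = 3/2"
proof -
  have "psi_prob ex_uncertain_edges ex_existence_prob ({0}, {}) = 1"
    unfolding psi_prob_def consistent_ex by (simp add: real_prob_ex del: One_nat_def)
  moreover have "influence ex_nodes ex_certain_edges (\<lambda>_. 1) 2 {} {0, 3} = 4"
    "influence ex_nodes ex_certain_edges (\<lambda>_. 1) 2 {(1, 2)} {0, 3} = 4"
    "influence ex_nodes ex_certain_edges (\<lambda>_. 1) 2 {} {0} = 2"
    "influence ex_nodes ex_certain_edges (\<lambda>_. 1) 2 {(1, 2)} {0} = 3"
    by (subst influence_ex; simp add: mem_ex_nodes spread_step_ex del: One_nat_def)+
  ultimately show ?thesis
    unfolding cond_marginal_def consistent_ex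
    by (simp add: real_prob_ex insert_commute del: One_nat_def)
qed

lemma psi_prob_ex_after: "psi_prob ex_uncertain_edges ex_existence_prob ({0, 1}, {}) = 1/2"
  unfolding psi_prob_def consistent_ex by (simp add: real_prob_ex del: One_nat_def)

lemma ex_marginal_after: "ex_marginal ({0, 1}, {}) = 2"
proof -
  have "influence ex_nodes ex_certain_edges (\<lambda>_. 1) 2 {} {0, 1, 3} = 4"
    "influence ex_nodes ex_certain_edges (\<lambda>_. 1) 2 {} {0, 1} = 2"
    by (subst influence_ex; simp add: mem_ex_nodes spread_step_ex del: One_nat_def)+
  then show ?thesis
    unfolding cond_marginal_def consistent_ex psi_prob_ex_after
    by (simp add: real_prob_ex insert_commute del: One_nat_def)
qed

theorem theorem3:
  shows "\<exists>(V :: nat set) Ec Eu u p (L :: nat) psi psi' v.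
           uncertain_network V Ec Eu u p \<and>
           partial_realization V Eu psi \<and> partial_realization V Eu psi' \<and>
           subrealization psi psi' \<and> psi_prob Eu u psi' > 0 \<and> v \<in> V \<and>
           cond_marginal V Ec Eu u p L v psi < cond_marginal V Ec Eu u p L v psi'"
proof (intro exI conjI)
  show "uncertain_network ex_nodes ex_certain_edges ex_uncertain_edges ex_existence_prob (\<lambda>_. 1)"
    by (fact uncertain_network_ex)
  show "partial_realization ex_nodes ex_uncertain_edges ({0}, {})"
    "partial_realization ex_nodes ex_uncertain_edges ({0, 1}, {})"
    by (auto simp: partial_realization_def ex_nodes_def)
  show "subrealization ({0::nat}, {}) ({0, 1}, {})"
    by (auto simp: subrealization_def)
  show "psi_prob ex_uncertain_edges ex_existence_prob ({0, 1}, {}) > 0"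
    unfolding psi_prob_ex_after by simp
  show "(3::nat) \<in> ex_nodes"
    by (simp add: ex_nodes_def)
  show "ex_marginal ({0}, {}) < ex_marginal ({0, 1}, {})"
    unfolding ex_marginal_before ex_marginal_after by simp
qed

end
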